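(* Under the interleaved updating scheme with updates $\pi^i_{k,j+1}\in\arg\max_{\hat\pi^i}F_{k,i,j}(\hat\pi^i)$ (maximum assumed attained), the sequence $\{J(\pi_k)\}_{k\ge0}$ converges to some limit $\bar J\in\mathbb R$; the set of limit points of the sequence of joint policies $\{\pi_k\}_{k\ge0}$ is nonempty; and for every subsequence with $\pi_{k_j}\to\bar\pi$ one has $J(\bar\pi)=\bar J$.
   Context: Cooperative Markov game $\langle \mathcal N,\mathcal S,\mathcal A,r,P,d\rangle$ with agents $\mathcal N=[n]=\{1,\dots,n\}$, finite state space $\mathcal S$, finite per-agent action spaces $\mathcal A^i$, joint action space $\mathcal A=\prod_i\mathcal A^i$, joint reward $r:\mathcal S\times\mathcal A\to\mathbb R$ bounded by $|r|\le R_{\max}$, transition kernel $P(\cdot\mid s,a)$, initial distribution $d$, discount $\gamma\in[0,1)$. A policy of agent $i$ is a map $\pi^i(\cdot\mid s)\in\Delta(\mathcal A^i)$ (viewed as a point of the finite-dimensional product of simplices, with the Euclidean topology); a joint policy $\pi=(\pi^i)_i$ acts by $\pi(a\mid s)=\prod_i\pi^i(a^i\mid s)$; write $a=(a^{-i},a^i)$, $\pi^{-i}=(\pi^r)_{r\ne i}$. Return: $J(\pi)=\mathbb E_\pi[\sum_{t\ge0}\gamma^t r(s_t,a_t)]$ with $s_0\sim d$, $a_t\sim\pi(\cdot\mid s_t)$, $s_{t+1}\sim P(\cdot\mid s_t,a_t)$. Value $V_\pi(s)$ and action value $Q_\pi(s,a)$ are the expected discounted returns conditioned on $s_0=s$ (resp.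 $s_0=s,a_0=a$); joint advantage $A_\pi(s,a)=Q_\pi(s,a)-V_\pi(s)$. Single-agent advantage: $Q^i_\pi(s,a^i)=\mathbb E_{a^{-i}\sim\pi^{-i}(\cdot\mid s)}[Q_\pi(s,(a^{-i},a^i))]$, $A^i_\pi(s,a^i)=Q^i_\pi(s,a^i)-V_\pi(s)$. Discounted state visitation: $\rho_\pi(s)=\sum_{t\ge0}\gamma^t\Pr_\pi(s_t=s)$. Interleaved scheme: rounds $k=0,1,2,\dots$; $\pi_k=(\pi^i_k)_i$ is the joint policy at the start of round $k$ ($\pi_0$ arbitrary). Within round $k$ agents are processed in order $i=1,\dots,n$; agent $i$ performs $K_i\ge1$ micro-steps $j=0,\dots,K_i-1$ producing iterates $\pi^i_{k,0}=\pi^i_k,\pi^i_{k,1},\dots,\pi^i_{k,K_i}$, and then $\pi^i_{k+1}:=\pi^i_{k,K_i}$. Complement policy: $\tau^{-i}_k:=(\{\pi^r_{k+1}\}_{r<i},\{\pi^r_k\}_{r>i})$; baseline joint policy $\Pi_{k,i,j}:=(\tau^{-i}_k,\pi^i_{k,j})$. Surrogate: for a policy $\hat\pi^i$ of agent $i$, $L^i_{\Pi_{k,i,j}}(\tau^{-i}_k,\hat\pi^i):=\sum_{s}\rho_{\Pi_{k,i,j}}(s)\sum_{a^i}\hat\pi^i(a^i\mid s)\,A^i_{\Pi_{k,i,j}}(s,a^i)$. Constants: $\varepsilon_{k,i,j}=\max_{s,a}|A_{\Pi_{k,i,j}}(s,a)|$, $C_{k,i,j}=\frac{4\gamma\varepsilon_{k,i,j}}{(1-\gamma)^2}$.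 Max conditional KL: $D^{\max}_{\mathrm{KL}}(\mu,\nu)=\sup_s\mathrm{KL}(\mu(\cdot\mid s)\,\|\,\nu(\cdot\mid s))$. Micro-step objective: $F_{k,i,j}(\hat\pi^i):=L^i_{\Pi_{k,i,j}}(\tau^{-i}_k,\hat\pi^i)-C_{k,i,j}\,D^{\max}_{\mathrm{KL}}(\pi^i_{k,j},\hat\pi^i)$. *)

theory Defs
  imports Complex_Main "HOL-Library.FuncSet" "HOL-Library.Extended_Real"
begin

text \<open>Agents are 0,...,n-1 (processed in this order).
  A per-agent policy is a function p :: 's => 'a => real (p s a = probability of a in state s);
  a joint policy is pi :: nat => 's => 'a => real (only components i < n matter).\<close>

definition JA :: "nat \<Rightarrow> (nat \<Rightarrow> 'a set) \<Rightarrow> (nat \<Rightarrow> 'a) set" where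
  "JA n A = PiE {..<n} A"

definition valid_agent_pol :: "(nat \<Rightarrow> 'a set) \<Rightarrow> nat \<Rightarrow> ('s \<Rightarrow> 'a \<Rightarrow> real) \<Rightarrow> bool" where
  "valid_agent_pol A i p \<longleftrightarrow> (\<forall>s. (\<forall>a\<in>A i. 0 \<le> p s a) \<and> (\<Sum>a\<in>A i. p s a) = 1)"

definition jprob :: "nat \<Rightarrow> (nat \<Rightarrow> 's \<Rightarrow> 'a \<Rightarrow> real) \<Rightarrow> 's \<Rightarrow> (nat \<Rightarrow> 'a) \<Rightarrow> real" where
  "jprob n \<pi> s a = (\<Prod>i<n. \<pi> i s (a i))"

definition Ppol :: "nat \<Rightarrow> (nat \<Rightarrow> 'a set) \<Rightarrow> ('s \<Rightarrow> (nat \<Rightarrow> 'a) \<Rightarrow> 's \<Rightarrow> real)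
    \<Rightarrow> (nat \<Rightarrow> 's \<Rightarrow> 'a \<Rightarrow> real) \<Rightarrow> 's \<Rightarrow> 's \<Rightarrow> real" where
  "Ppol n A P \<pi> s s' = (\<Sum>a\<in>JA n A. jprob n \<pi> s a * P s a s')"

definition rpol :: "nat \<Rightarrow> (nat \<Rightarrow> 'a set) \<Rightarrow> ('s \<Rightarrow> (nat \<Rightarrow> 'a) \<Rightarrow> real)
    \<Rightarrow> (nat \<Rightarrow> 's \<Rightarrow> 'a \<Rightarrow> real) \<Rightarrow> 's \<Rightarrow> real" where
  "rpol n A r \<pi> s = (\<Sum>a\<in>JA n A. jprob n \<pi> s a * r s a)"

primrec sdist :: "('s::finite \<Rightarrow> 's \<Rightarrow> real) \<Rightarrow> ('s \<Rightarrow> real) \<Rightarrow> nat \<Rightarrow> 's \<Rightarrow> real" where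
  "sdist K \<mu> 0 = \<mu>"
| "sdist K \<mu> (Suc t) = (\<lambda>s'. \<Sum>s\<in>UNIV. sdist K \<mu> t s * K s s')"

definition ret :: "nat \<Rightarrow> (nat \<Rightarrow> 'a set) \<Rightarrow> ('s::finite \<Rightarrow> (nat \<Rightarrow> 'a) \<Rightarrow> 's \<Rightarrow> real)
    \<Rightarrow> ('s \<Rightarrow> (nat \<Rightarrow> 'a) \<Rightarrow> real) \<Rightarrow> real \<Rightarrow> (nat \<Rightarrow> 's \<Rightarrow> 'a \<Rightarrow> real) \<Rightarrow> ('s \<Rightarrow> real) \<Rightarrow> real" where
  "ret n A P r \<gamma> \<pi> \<mu> =
     (\<Sum>t. \<gamma> ^ t * (\<Sum>s\<in>UNIV. sdist (Ppol n A P \<pi>) \<mu> t s * rpol n A r \<pi> s))"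

definition Jret where
  "Jret n A P r \<gamma> d \<pi> = ret n A P r \<gamma> \<pi> d"

definition Vfun where
  "Vfun n A P r \<gamma> \<pi> s = ret n A P r \<gamma> \<pi> (\<lambda>s'. if s' = s then 1 else 0)"

text \<open>Q(s,a) = r(s,a) + E[sum_{t>=1} gamma^t r(s_t,a_t)] where s_1 ~ P(.|s,a)\<close>
definition Qfun where
  "Qfun n A P r \<gamma> \<pi> s a = r s a + \<gamma> * ret n A P r \<gamma> \<pi> (P s a)"

definition Advfun where
  "Advfun n A P r \<gamma> \<pi> s a = Qfun n A P r \<gamma> \<pi> s a - Vfun n A P r \<gamma> \<pi> s"

text \<open>single-agent action value / advantage: a^{-i} ~ pi^{-i}(.|s)\<close>
definition Qi where
  "Qi n A P r \<gamma> \<pi> i s ai =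
     (\<Sum>a\<in>{a\<in>JA n A. a i = ai}. (\<Prod>q\<in>{..<n} - {i}. \<pi> q s (a q)) * Qfun n A P r \<gamma> \<pi> s a)"

definition Ai where
  "Ai n A P r \<gamma> \<pi> i s ai = Qi n A P r \<gamma> \<pi> i s ai - Vfun n A P r \<gamma> \<pi> s"

definition visit where
  "visit n A P \<gamma> d \<pi> s = (\<Sum>t. \<gamma> ^ t * sdist (Ppol n A P \<pi>) d t s)"

definition surr where
  "surr n A P r \<gamma> d \<pi> i p =
     (\<Sum>s\<in>UNIV. visit n A P \<gamma> d \<pi> s * (\<Sum>ai\<in>A i. p s ai * Ai n A P r \<gamma> \<pi> i s ai))"

definition epsA where
  "epsA n A P r \<gamma> \<pi> = Max {\<bar>Advfun n A P r \<gamma> \<pi> s a\<bar> | s a. a \<in> JA n A}"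

definition Cpen where
  "Cpen n A P r \<gamma> \<pi> = 4 * \<gamma> * epsA n A P r \<gamma> \<pi> / (1 - \<gamma>)^2"

definition KLcond :: "(nat \<Rightarrow> 'a set) \<Rightarrow> nat \<Rightarrow> ('s \<Rightarrow> 'a \<Rightarrow> real) \<Rightarrow> ('s \<Rightarrow> 'a \<Rightarrow> real) \<Rightarrow> 's \<Rightarrow> ereal" where
  "KLcond A i \<mu> \<nu> s =
     (\<Sum>a\<in>A i. if \<mu> s a = 0 then 0 else if \<nu> s a = 0 then \<infinity>
              else ereal (\<mu> s a * ln (\<mu> s a / \<nu> s a)))"

definition DmaxKL :: "(nat \<Rightarrow> 'a set) \<Rightarrow> nat \<Rightarrow> ('s \<Rightarrow> 'a \<Rightarrow> real) \<Rightarrow> ('s \<Rightarrow> 'a \<Rightarrow> real) \<Rightarrow> ereal" where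
  "DmaxKL A i \<mu> \<nu> = (SUP s. KLcond A i \<mu> \<nu> s)"

text \<open>micro-step objective F = L^i_Pi(tau, hat pi) - C * Dmax_KL(pi_old, hat pi), where Pi is the
  baseline joint policy (whose i-th component is pi_old)\<close>
definition Fobj where
  "Fobj n A P r \<gamma> d B i p =
     ereal (surr n A P r \<gamma> d B i p) - ereal (Cpen n A P r \<gamma> B) * DmaxKL A i (B i) p"

text \<open>Interleaved scheme: it k i j = pi^i_{k,j}; pi_k = (lambda i. it k i 0).
  Baseline joint policy Pi_{k,i,j} = (tau^{-i}_k, pi^i_{k,j}).\<close>
definition baseline :: "(nat \<Rightarrow> nat \<Rightarrow> nat \<Rightarrow> 's \<Rightarrow> 'a \<Rightarrow> real) \<Rightarrow> nat \<Rightarrow> nat \<Rightarrow> nat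
    \<Rightarrow> nat \<Rightarrow> 's \<Rightarrow> 'a \<Rightarrow> real" where
  "baseline it k i j = (\<lambda>q. if q < i then it (Suc k) q 0 else if q = i then it k i j else it k q 0)"

text \<open>pointwise (= Euclidean) convergence of joint policies on the product of simplices\<close>
definition pol_conv :: "nat \<Rightarrow> (nat \<Rightarrow> 'a set) \<Rightarrow> (nat \<Rightarrow> nat \<Rightarrow> 's \<Rightarrow> 'a \<Rightarrow> real)
    \<Rightarrow> (nat \<Rightarrow> 's \<Rightarrow> 'a \<Rightarrow> real) \<Rightarrow> bool" where
  "pol_conv n A sq lm \<longleftrightarrow> (\<forall>i<n. \<forall>s. \<forall>a\<in>A i. (\<lambda>k. sq k i s a) \<longlonglongrightarrow> lm i s a)"

end

theory Submission
  imports Defs "HOL-Analysis.Analysis"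
begin

text \<open>Every micro-step of the scheme can only increase the return.  The old policy is a feasible
  choice with objective \<open>F = 0\<close>, and \<open>F\<close> is a lower bound for the improvement: by the
  performance difference lemma the improvement is the discounted expected advantage under the
  new state distribution, the surrogate is the same quantity under the old one, the two differ
  by at most \<open>\<gamma> \<epsilon> \<delta>\<^sup>2 / (1 - \<gamma>)\<^sup>2\<close> for an L1 policy change \<open>\<delta>\<close>, and Pinsker's inequality bounds
  \<open>\<delta>\<^sup>2 / 4\<close> by the KL penalty.  So \<open>J(\<pi>\<^sub>k)\<close> increases, is bounded by \<open>Rmax / (1 - \<gamma>)\<close> and
  converges; limit points exist because the policies live in a compact product of simplices, and
  \<open>J\<close> is continuous in the policy (Tannery's theorem), so it takes the limit value at each of
  them.\<close>

section \<open>Discounted sums along a finite Markov chain\<close>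

definition stochastic :: "('s::finite \<Rightarrow> 's \<Rightarrow> real) \<Rightarrow> bool" where
  "stochastic K \<longleftrightarrow> (\<forall>s. (\<forall>s'. 0 \<le> K s s') \<and> (\<Sum>s'\<in>UNIV. K s s') = 1)"

definition prob_vec :: "('s::finite \<Rightarrow> real) \<Rightarrow> bool" where
  "prob_vec \<mu> \<longleftrightarrow> (\<forall>s. 0 \<le> \<mu> s) \<and> (\<Sum>s\<in>UNIV. \<mu> s) = 1"

definition push :: "('s::finite \<Rightarrow> 's \<Rightarrow> real) \<Rightarrow> ('s \<Rightarrow> real) \<Rightarrow> 's \<Rightarrow> real" where
  "push K \<mu> = (\<lambda>s'. \<Sum>s\<in>UNIV. \<mu> s * K s s')"

definition dirac :: "'s \<Rightarrow> 's \<Rightarrow> real" where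
  "dirac s = (\<lambda>x. if x = s then 1 else 0)"

definition disc_sum :: "('s::finite \<Rightarrow> 's \<Rightarrow> real) \<Rightarrow> ('s \<Rightarrow> real) \<Rightarrow> ('s \<Rightarrow> real) \<Rightarrow> real \<Rightarrow> real" where
  "disc_sum K g \<mu> \<gamma> = (\<Sum>t. \<gamma> ^ t * (\<Sum>s\<in>UNIV. sdist K \<mu> t s * g s))"

lemma sdist_Suc_push: "sdist K \<mu> (Suc t) = sdist K (push K \<mu>) t"
  by (induction t) (simp_all add: push_def)

lemma prob_vec_push:
  assumes "stochastic K" "prob_vec \<mu>"
  shows "prob_vec (push K \<mu>)"
proof -
  have "(\<Sum>s'\<in>UNIV. \<Sum>s\<in>UNIV. \<mu> s * K s s') = (\<Sum>s\<in>UNIV. \<mu> s * (\<Sum>s'\<in>UNIV. K s s'))"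
    by (subst sum.swap) (simp add: sum_distrib_left)
  also have "\<dots> = 1" using assms by (simp add: stochastic_def prob_vec_def)
  finally show ?thesis
    using assms unfolding prob_vec_def push_def stochastic_def by (auto intro!: sum_nonneg)
qed

lemma prob_vec_sdist: "stochastic K \<Longrightarrow> prob_vec \<mu> \<Longrightarrow> prob_vec (sdist K \<mu> t)"
  by (induction t arbitrary: \<mu>) (simp_all add: sdist_Suc_push prob_vec_push del: sdist.simps(2))

lemma prob_vec_dirac: "prob_vec (dirac s)"
  by (simp add: prob_vec_def dirac_def)

lemma prob_vec_abs_le_1: "prob_vec \<mu> \<Longrightarrow> \<bar>\<mu> s\<bar> \<le> 1"
  unfolding prob_vec_def using member_le_sum[of s UNIV \<mu>] by auto

lemma sum_dirac_mult: "(\<Sum>x\<in>UNIV. dirac s x * f x) = f (s::'s::finite)"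
proof -
  have "(\<Sum>x\<in>UNIV. dirac s x * f x) = (\<Sum>x\<in>UNIV. if x = s then f x else 0)"
    by (rule sum.cong) (auto simp: dirac_def)
  then show ?thesis by simp
qed

lemma sum_mult_dirac: "(\<Sum>x\<in>UNIV. f x * dirac x s) = f (s::'s::finite)"
proof -
  have "(\<Sum>x\<in>UNIV. f x * dirac x s) = (\<Sum>x\<in>UNIV. if x = s then f x else 0)"
    by (rule sum.cong) (auto simp: dirac_def)
  then show ?thesis by simp
qed

lemma push_dirac: "push K (dirac s) = K s"
  unfolding push_def using sum_dirac_mult[of s "\<lambda>x. K x s'" for s'] by auto

lemma abs_expectation_le:
  assumes "prob_vec \<mu>" "\<And>s. \<bar>g s\<bar> \<le> B"
  shows "\<bar>\<Sum>s\<in>UNIV. \<mu> s * g s\<bar> \<le> B"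
proof -
  have "\<bar>\<Sum>s\<in>UNIV. \<mu> s * g s\<bar> \<le> (\<Sum>s\<in>UNIV. \<bar>\<mu> s * g s\<bar>)" by (rule sum_abs)
  also have "\<dots> \<le> (\<Sum>s\<in>UNIV. \<mu> s * B)"
    using assms by (intro sum_mono) (auto simp: prob_vec_def abs_mult intro: mult_left_mono)
  also have "\<dots> = B" using assms by (simp add: prob_vec_def sum_distrib_right[symmetric])
  finally show ?thesis .
qed

lemma summable_geometric_bounded:
  fixes \<gamma> :: real
  assumes "0 \<le> \<gamma>" "\<gamma> < 1" "\<And>t. \<bar>X t\<bar> \<le> B"
  shows "summable (\<lambda>t. \<gamma> ^ t * X t)"
proof (rule summable_comparison_test)
  show "\<exists>N. \<forall>t\<ge>N. norm (\<gamma> ^ t * X t) \<le> B * \<gamma> ^ t"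
    using assms by (intro exI[of _ 0] allI impI) (simp add: abs_mult mult.commute mult_right_mono)
  show "summable (\<lambda>t. B * \<gamma> ^ t)"
    using assms by (intro summable_mult summable_geometric) auto
qed

locale discounted_chain =
  fixes K :: "'s::finite \<Rightarrow> 's \<Rightarrow> real" and \<gamma> :: real
  assumes stochastic: "stochastic K" and gamma_nonneg: "0 \<le> \<gamma>" and gamma_less_1: "\<gamma> < 1"
begin

lemma summable_disc_sum:
  assumes "prob_vec \<mu>" "\<And>s. \<bar>g s\<bar> \<le> B"
  shows "summable (\<lambda>t. \<gamma> ^ t * (\<Sum>s\<in>UNIV. sdist K \<mu> t s * g s))"
  using assms stochastic gamma_nonneg gamma_less_1
  by (intro summable_geometric_bounded abs_expectation_le[OF prob_vec_sdist]) auto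

lemma disc_sum_unfold:
  assumes \<mu>: "prob_vec \<mu>" and g: "\<And>s. \<bar>g s\<bar> \<le> B"
  shows "disc_sum K g \<mu> \<gamma> = (\<Sum>s\<in>UNIV. \<mu> s * g s) + \<gamma> * disc_sum K g (push K \<mu>) \<gamma>"
proof -
  have "disc_sum K g \<mu> \<gamma>
      = (\<Sum>t. \<gamma> ^ Suc t * (\<Sum>s\<in>UNIV. sdist K \<mu> (Suc t) s * g s)) + (\<Sum>s\<in>UNIV. \<mu> s * g s)"
    unfolding disc_sum_def using suminf_split_head[OF summable_disc_sum[OF \<mu> g]] by simp
  also have "(\<Sum>t. \<gamma> ^ Suc t * (\<Sum>s\<in>UNIV. sdist K \<mu> (Suc t) s * g s))
      = (\<Sum>t. \<gamma> * (\<gamma> ^ t * (\<Sum>s\<in>UNIV. sdist K (push K \<mu>) t s * g s)))"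
    by (simp only: sdist_Suc_push power_Suc mult.assoc)
  also have "\<dots> = \<gamma> * disc_sum K g (push K \<mu>) \<gamma>"
    unfolding disc_sum_def
    by (rule suminf_mult[OF summable_disc_sum[OF prob_vec_push[OF stochastic \<mu>] g]])
  finally show ?thesis by simp
qed

lemma sdist_linear: "sdist K \<mu> t s' = (\<Sum>s\<in>UNIV. \<mu> s * sdist K (dirac s) t s')"
proof (induction t arbitrary: s')
  case 0
  then show ?case by (simp add: sum_mult_dirac)
next
  case (Suc t)
  have "sdist K \<mu> (Suc t) s' = (\<Sum>x\<in>UNIV. (\<Sum>s\<in>UNIV. \<mu> s * sdist K (dirac s) t x) * K x s')"
    using Suc by simp
  also have "\<dots> = (\<Sum>s\<in>UNIV. \<mu> s * (\<Sum>x\<in>UNIV. sdist K (dirac s) t x * K x s'))"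
    unfolding sum_distrib_right sum_distrib_left mult.assoc by (rule sum.swap)
  finally show ?case by simp
qed

lemma disc_sum_linear:
  assumes g: "\<And>s. \<bar>g s\<bar> \<le> B"
  shows "disc_sum K g \<mu> \<gamma> = (\<Sum>s\<in>UNIV. \<mu> s * disc_sum K g (dirac s) \<gamma>)"
proof -
  note sm = summable_disc_sum[OF prob_vec_dirac g]
  have "disc_sum K g \<mu> \<gamma>
      = (\<Sum>t. \<Sum>s\<in>UNIV. \<mu> s * (\<gamma> ^ t * (\<Sum>x\<in>UNIV. sdist K (dirac s) t x * g x)))"
    unfolding disc_sum_def
    apply (subst sdist_linear)
    unfolding sum_distrib_left sum_distrib_right by (subst sum.swap) (simp add: mult_ac)
  also have "\<dots> = (\<Sum>s\<in>UNIV. \<Sum>t. \<mu> s * (\<gamma> ^ t * (\<Sum>x\<in>UNIV. sdist K (dirac s) t x * g x)))"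
    using sm by (intro suminf_sum summable_mult)
  also have "\<dots> = (\<Sum>s\<in>UNIV. \<mu> s * disc_sum K g (dirac s) \<gamma>)"
    unfolding disc_sum_def using sm by (intro sum.cong refl suminf_mult)
  finally show ?thesis .
qed

lemma disc_sum_bellman:
  assumes g: "\<And>s. \<bar>g s\<bar> \<le> B"
  shows "disc_sum K g (dirac s) \<gamma> = g s + \<gamma> * (\<Sum>s'\<in>UNIV. K s s' * disc_sum K g (dirac s') \<gamma>)"
  using disc_sum_unfold[OF prob_vec_dirac[of s] g] disc_sum_linear[OF g, where \<mu> = "K s"]
  by (simp add: sum_dirac_mult push_dirac)

lemma sum_sdist_mult_next:
  "(\<Sum>s\<in>UNIV. sdist K \<mu> t s * (\<Sum>s'\<in>UNIV. K s s' * V s'))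
     = (\<Sum>s'\<in>UNIV. sdist K \<mu> (Suc t) s' * V s')"
proof -
  have "(\<Sum>s\<in>UNIV. sdist K \<mu> t s * (\<Sum>s'\<in>UNIV. K s s' * V s'))
      = (\<Sum>s\<in>UNIV. \<Sum>s'\<in>UNIV. sdist K \<mu> t s * K s s' * V s')"
    by (simp add: sum_distrib_left mult.assoc)
  also have "\<dots> = (\<Sum>s'\<in>UNIV. \<Sum>s\<in>UNIV. sdist K \<mu> t s * K s s' * V s')"
    by (rule sum.swap)
  finally show ?thesis by (simp add: sum_distrib_right)
qed

text \<open>The \<open>V\<close>-terms telescope.\<close>
lemma disc_sum_telescope:
  assumes \<mu>: "prob_vec \<mu>" and g: "\<And>s. \<bar>g s\<bar> \<le> B"
  shows "(\<lambda>t. \<gamma> ^ t * (\<Sum>s\<in>UNIV. sdist K \<mu> t s * (g s + \<gamma> * (\<Sum>s'\<in>UNIV. K s s' * V s') - V s)))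
     sums (disc_sum K g \<mu> \<gamma> - (\<Sum>s\<in>UNIV. \<mu> s * V s))"
proof -
  define c where "c t = \<gamma> ^ t * (\<Sum>s\<in>UNIV. sdist K \<mu> t s * V s)" for t
  have diff: "\<gamma> ^ t * (\<Sum>s\<in>UNIV. sdist K \<mu> t s * (g s + \<gamma> * (\<Sum>s'\<in>UNIV. K s s' * V s') - V s))
      = \<gamma> ^ t * (\<Sum>s\<in>UNIV. sdist K \<mu> t s * g s) + (c (Suc t) - c t)" for t
    unfolding c_def sum_sdist_mult_next[symmetric]
    by (simp add: algebra_simps sum.distrib sum_subtractf sum_distrib_left)
  have "c \<longlonglongrightarrow> 0"
  proof (rule Lim_null_comparison)
    define BV where "BV = (\<Sum>x\<in>UNIV. \<bar>V x\<bar>)"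
    have "\<bar>\<Sum>s\<in>UNIV. sdist K \<mu> t s * V s\<bar> \<le> BV" for t
      unfolding BV_def using stochastic \<mu>
      by (intro abs_expectation_le[OF prob_vec_sdist]) (auto intro: member_le_sum)
    then show "\<forall>\<^sub>F t in sequentially. norm (c t) \<le> BV * \<gamma> ^ t"
      using gamma_nonneg
      by (intro always_eventually allI) (simp add: c_def abs_mult mult.commute[of BV] mult_left_mono)
    show "(\<lambda>t. BV * \<gamma> ^ t) \<longlonglongrightarrow> 0"
      using gamma_nonneg gamma_less_1 by (intro tendsto_mult_right_zero LIMSEQ_power_zero) auto
  qed
  from sums_add[OF summable_sums[OF summable_disc_sum[OF \<mu> g]] telescope_sums[OF this]]
  show ?thesis unfolding disc_sum_def diff by (simp add: c_def)
qed

end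

lemma sdist_tendsto:
  assumes "\<And>s s'. (\<lambda>m. K m s s') \<longlonglongrightarrow> K' s s'"
  shows "(\<lambda>m. sdist (K m) \<mu> t s) \<longlonglongrightarrow> sdist K' \<mu> t s"
proof (induction t arbitrary: s)
  case (Suc t)
  then show ?case using assms by (simp del: sdist.simps(1)) (intro tendsto_sum tendsto_mult; auto)
qed simp

lemma sdist_L1_diff:
  assumes "stochastic K" "stochastic K'" "prob_vec \<mu>"
    and "\<And>s. (\<Sum>s'\<in>UNIV. \<bar>K' s s' - K s s'\<bar>) \<le> \<delta>"
  shows "(\<Sum>s\<in>UNIV. \<bar>sdist K' \<mu> t s - sdist K \<mu> t s\<bar>) \<le> real t * \<delta>"
proof (induction t)
  case 0
  then show ?case by simp
next
  case (Suc t)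
  let ?d' = "sdist K' \<mu> t" and ?d = "sdist K \<mu> t"
  have d: "prob_vec ?d" using prob_vec_sdist[OF assms(1,3)] .
  have "(\<Sum>s'\<in>UNIV. \<bar>sdist K' \<mu> (Suc t) s' - sdist K \<mu> (Suc t) s'\<bar>)
     = (\<Sum>s'\<in>UNIV. \<bar>(\<Sum>s\<in>UNIV. (?d' s - ?d s) * K' s s') + (\<Sum>s\<in>UNIV. ?d s * (K' s s' - K s s'))\<bar>)"
    by (simp add: algebra_simps sum.distrib sum_subtractf)
  also have "\<dots> \<le> (\<Sum>s'\<in>UNIV. (\<Sum>s\<in>UNIV. \<bar>?d' s - ?d s\<bar> * K' s s') + (\<Sum>s\<in>UNIV. ?d s * \<bar>K' s s' - K s s'\<bar>))"
    using assms(2) d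
    by (intro sum_mono order_trans[OF abs_triangle_ineq] add_mono order_trans[OF sum_abs])
      (auto simp: abs_mult stochastic_def prob_vec_def)
  also have "\<dots> = (\<Sum>s\<in>UNIV. \<bar>?d' s - ?d s\<bar> * (\<Sum>s'\<in>UNIV. K' s s'))
      + (\<Sum>s\<in>UNIV. ?d s * (\<Sum>s'\<in>UNIV. \<bar>K' s s' - K s s'\<bar>))"
    by (simp add: sum.distrib sum_distrib_left sum.swap[of "\<lambda>s' s. \<bar>?d' s - ?d s\<bar> * K' s s'"]
        sum.swap[of "\<lambda>s' s. ?d s * \<bar>K' s s' - K s s'\<bar>"])
  also have "\<dots> \<le> real t * \<delta> + (\<Sum>s\<in>UNIV. ?d s * \<delta>)"
    using Suc assms(2,4) d
    by (intro add_mono sum_mono mult_left_mono) (auto simp: stochastic_def prob_vec_def)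
  also have "\<dots> = real (Suc t) * \<delta>"
    using d by (simp add: prob_vec_def sum_distrib_right[symmetric] sum_distrib_left[symmetric] algebra_simps)
  finally show ?case .
qed

text \<open>The step \<open>t\<close> marginals differ by at most \<open>t \<delta>\<close> in L1, and \<open>\<Sum>\<^sub>t t \<gamma>\<^sup>t = \<gamma> / (1 - \<gamma>)\<^sup>2\<close>.\<close>
lemma (in discounted_chain) disc_sum_perturbation:
  assumes K': "stochastic K'" and \<mu>: "prob_vec \<mu>" and g: "\<And>s. \<bar>g s\<bar> \<le> B"
    and \<delta>: "\<And>s. (\<Sum>s'\<in>UNIV. \<bar>K' s s' - K s s'\<bar>) \<le> \<delta>"
  shows "\<bar>disc_sum K' g \<mu> \<gamma> - disc_sum K g \<mu> \<gamma>\<bar> \<le> \<gamma> * \<delta> * B / (1 - \<gamma>)\<^sup>2"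
proof -
  interpret K': discounted_chain K' \<gamma>
    using K' gamma_nonneg gamma_less_1 by unfold_locales
  define X where "X t = \<gamma> ^ t * (\<Sum>s\<in>UNIV. (sdist K' \<mu> t s - sdist K \<mu> t s) * g s)" for t
  define c where "c = \<gamma> * \<delta> * B"
  have "X sums (disc_sum K' g \<mu> \<gamma> - disc_sum K g \<mu> \<gamma>)"
    using sums_diff[OF summable_sums[OF K'.summable_disc_sum[OF \<mu> g]]
        summable_sums[OF summable_disc_sum[OF \<mu> g]]]
    unfolding X_def disc_sum_def by (simp add: left_diff_distrib sum_subtractf right_diff_distrib)
  then have X: "(\<lambda>t. X (Suc t)) sums (disc_sum K' g \<mu> \<gamma> - disc_sum K g \<mu> \<gamma>)"
    using sums_Suc_iff[of X] by (simp add: X_def)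
  have B: "0 \<le> B" using g[of undefined] by linarith
  have X_le: "norm (X (Suc t)) \<le> c * (of_nat (Suc t) * \<gamma> ^ t)" for t
  proof -
    have "\<bar>\<Sum>s\<in>UNIV. (sdist K' \<mu> (Suc t) s - sdist K \<mu> (Suc t) s) * g s\<bar>
        \<le> (\<Sum>s\<in>UNIV. \<bar>sdist K' \<mu> (Suc t) s - sdist K \<mu> (Suc t) s\<bar>) * B"
      unfolding sum_distrib_right using g
      by (intro order_trans[OF sum_abs] sum_mono) (simp add: abs_mult mult_left_mono)
    also have "\<dots> \<le> real (Suc t) * \<delta> * B"
      using sdist_L1_diff[OF stochastic K' \<mu> \<delta>] B by (rule mult_right_mono)
    finally have "norm (X (Suc t)) \<le> \<gamma> ^ Suc t * (real (Suc t) * \<delta> * B)"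
      unfolding X_def using gamma_nonneg by (simp add: abs_mult mult_left_mono)
    then show ?thesis by (simp add: c_def algebra_simps)
  qed
  have "(\<lambda>t. c * (of_nat (Suc t) * \<gamma> ^ t)) sums (c * (1 / (1 - \<gamma>)\<^sup>2))"
    using gamma_nonneg gamma_less_1 by (intro sums_mult geometric_deriv_sums) auto
  from norm_suminf_le[OF X_le sums_summable[OF this]] this
  show ?thesis unfolding sums_unique[OF X, symmetric] by (simp add: sums_unique[symmetric] c_def)
qed

section \<open>A Pinsker-type inequality\<close>

lemma mult_sub_sqrt_le_mult_ln_div:
  fixes p q :: real
  assumes "0 < p" "0 < q"
  shows "2 * p - 2 * (sqrt p * sqrt q) \<le> p * ln (p / q)"
proof -
  define x where "x = sqrt q / sqrt p"
  have "0 < x" using assms by (simp add: x_def)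
  have "ln (p / q) = - 2 * ln x"
    using assms by (simp add: x_def ln_div ln_sqrt)
  moreover have "ln x \<le> x - 1" using ln_le_minus_one[OF \<open>0 < x\<close>] .
  ultimately have "- 2 * p * (x - 1) \<le> p * ln (p / q)"
    using assms by (simp add: mult_left_mono)
  moreover have "p * x = sqrt p * sqrt q"
    using assms by (simp add: x_def field_simps)
  ultimately show ?thesis by (simp add: algebra_simps)
qed

text \<open>The L1 distance is controlled by the Hellinger affinity
  \<open>\<Sum> \<surd>p \<surd>q\<close> through Cauchy-Schwarz on \<open>|p - q| = |\<surd>p - \<surd>q| (\<surd>p + \<surd>q)\<close>.\<close>
lemma sum_abs_diff_sq_le_hellinger:
  fixes p q :: "'b \<Rightarrow> real"
  assumes "finite S" and nonneg: "\<And>b. b \<in> S \<Longrightarrow> 0 \<le> p b" "\<And>b. b \<in> S \<Longrightarrow> 0 \<le> q b"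
    and sum1: "sum p S = 1" "sum q S = 1"
  shows "(\<Sum>b\<in>S. \<bar>p b - q b\<bar>)\<^sup>2 \<le> 4 * (2 - 2 * (\<Sum>b\<in>S. sqrt (p b) * sqrt (q b)))"
proof -
  let ?a = "\<lambda>b. \<bar>sqrt (p b) - sqrt (q b)\<bar>" and ?c = "\<lambda>b. sqrt (p b) + sqrt (q b)"
  let ?m = "\<Sum>b\<in>S. sqrt (p b) * sqrt (q b)"
  have "\<bar>p b - q b\<bar> = ?a b * ?c b" if "b \<in> S" for b
  proof -
    have "p b - q b = (sqrt (p b) - sqrt (q b)) * ?c b"
      using nonneg[OF that] by (simp add: algebra_simps)
    then show ?thesis using nonneg[OF that] by (simp add: abs_mult)
  qed
  then have "(\<Sum>b\<in>S. \<bar>p b - q b\<bar>)\<^sup>2 = (\<Sum>b\<in>S. ?a b * ?c b)\<^sup>2"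
    by (simp cong: sum.cong)
  also have "\<dots> \<le> (\<Sum>b\<in>S. (?a b)\<^sup>2) * (\<Sum>b\<in>S. (?c b)\<^sup>2)"
    by (rule Cauchy_Schwarz_ineq_sum)
  also have "(\<Sum>b\<in>S. (?a b)\<^sup>2) = (\<Sum>b\<in>S. p b + q b - 2 * (sqrt (p b) * sqrt (q b)))"
    using nonneg by (intro sum.cong) (auto simp: power2_eq_square algebra_simps)
  also have "\<dots> = 2 - 2 * ?m"
    using sum1 by (simp add: sum.distrib sum_subtractf sum_distrib_left)
  also have "(\<Sum>b\<in>S. (?c b)\<^sup>2) = (\<Sum>b\<in>S. p b + q b + 2 * (sqrt (p b) * sqrt (q b)))"
    using nonneg by (intro sum.cong) (auto simp: power2_eq_square algebra_simps)
  also have "\<dots> = 2 + 2 * ?m"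
    using sum1 by (simp add: sum.distrib sum_distrib_left)
  also have "(2 - 2 * ?m) * (2 + 2 * ?m) \<le> 4 * (2 - 2 * ?m)"
  proof -
    have "sqrt (p b) * sqrt (q b) \<le> (p b + q b) / 2" if "b \<in> S" for b
      using nonneg[OF that] sum_squares_bound[of "sqrt (p b)" "sqrt (q b)"] by simp
    then have "?m \<le> (\<Sum>b\<in>S. (p b + q b) / 2)" by (rule sum_mono)
    also have "\<dots> = 1" using sum1 by (simp add: sum_divide_distrib[symmetric] sum.distrib)
    finally have "?m \<le> 1" .
    then have "(2 - 2 * ?m) * (2 + 2 * ?m) \<le> (2 - 2 * ?m) * 4"
      by (intro mult_left_mono) auto
    then show ?thesis by linarith
  qed
  finally show ?thesis .
qed

text \<open>This is the weak Pinsker inequality \<open>KL \<ge> TV\<^sup>2\<close> (with \<open>TV\<close> half the L1 distance)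
  that underlies the penalty constant \<open>C\<close>.\<close>
lemma L1_sq_le_KLcond:
  fixes \<mu> \<nu> :: "'s \<Rightarrow> 'a \<Rightarrow> real"
  assumes fin: "finite (A i)" and \<mu>: "valid_agent_pol A i \<mu>" and \<nu>: "valid_agent_pol A i \<nu>"
  shows "ereal ((\<Sum>b\<in>A i. \<bar>\<nu> s b - \<mu> s b\<bar>)\<^sup>2 / 4) \<le> KLcond A i \<mu> \<nu> s"
proof (cases "\<exists>b\<in>A i. \<mu> s b \<noteq> 0 \<and> \<nu> s b = 0")
  case True
  then have "KLcond A i \<mu> \<nu> s = \<infinity>"
    unfolding KLcond_def using fin by (subst sum_Pinfty) auto
  then show ?thesis by simp
next
  case False
  define T where "T b = (if \<mu> s b = 0 then 0 else \<mu> s b * ln (\<mu> s b / \<nu> s b))" for b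
  have nonneg: "0 \<le> \<mu> s b" "0 \<le> \<nu> s b" if "b \<in> A i" for b
    using \<mu> \<nu> that by (auto simp: valid_agent_pol_def)
  have sum1: "sum (\<mu> s) (A i) = 1" "sum (\<nu> s) (A i) = 1"
    using \<mu> \<nu> by (auto simp: valid_agent_pol_def)
  have "KLcond A i \<mu> \<nu> s = ereal (\<Sum>b\<in>A i. T b)"
    unfolding KLcond_def T_def sum_ereal[symmetric] using False by (intro sum.cong) auto
  moreover have "(\<Sum>b\<in>A i. \<bar>\<nu> s b - \<mu> s b\<bar>)\<^sup>2 / 4 \<le> 2 - 2 * (\<Sum>b\<in>A i. sqrt (\<mu> s b) * sqrt (\<nu> s b))"
    using sum_abs_diff_sq_le_hellinger[OF fin _ _ sum1] nonneg by (simp add: abs_minus_commute)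
  moreover have "\<dots> = (\<Sum>b\<in>A i. 2 * \<mu> s b - 2 * (sqrt (\<mu> s b) * sqrt (\<nu> s b)))"
    using sum1 by (simp add: sum_subtractf sum_distrib_left[symmetric])
  moreover have "\<dots> \<le> (\<Sum>b\<in>A i. T b)"
  proof (rule sum_mono)
    fix b assume b: "b \<in> A i"
    show "2 * \<mu> s b - 2 * (sqrt (\<mu> s b) * sqrt (\<nu> s b)) \<le> T b"
    proof (cases "\<mu> s b = 0")
      case False
      then have "0 < \<mu> s b" "0 < \<nu> s b"
        using nonneg[OF b] \<open>\<not> (\<exists>b\<in>A i. \<mu> s b \<noteq> 0 \<and> \<nu> s b = 0)\<close> b by force+
      then show ?thesis using mult_sub_sqrt_le_mult_ln_div False by (simp add: T_def)
    qed (simp add: T_def)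
  qed
  ultimately show ?thesis by simp
qed

lemma L1_sq_le_DmaxKL:
  assumes "finite (A i)" "valid_agent_pol A i \<mu>" "valid_agent_pol A i \<nu>"
  shows "ereal ((\<Sum>b\<in>A i. \<bar>\<nu> s b - \<mu> s b\<bar>)\<^sup>2 / 4) \<le> DmaxKL A i \<mu> \<nu>"
  using L1_sq_le_KLcond[OF assms] unfolding DmaxKL_def by (rule order_trans) (rule SUP_upper, simp)

lemma KLcond_self: "KLcond A i \<mu> \<mu> s = 0"
  unfolding KLcond_def by (intro sum.neutral) auto

lemma DmaxKL_self: "DmaxKL A i \<mu> \<mu> = 0"
  by (simp add: DmaxKL_def KLcond_self)

section \<open>Cooperative Markov games\<close>

lemma bounded_family_convergent_subseq:
  fixes x :: "nat \<Rightarrow> 'c \<Rightarrow> real"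
  assumes "finite S" "\<And>k c. c \<in> S \<Longrightarrow> \<bar>x k c\<bar> \<le> B"
  shows "\<exists>kk l. strict_mono kk \<and> (\<forall>c\<in>S. (\<lambda>m. x (kk m) c) \<longlonglongrightarrow> l c)"
  using assms
proof (induction S rule: finite_induct)
  case empty
  show ?case by (rule exI[of _ id]) (auto simp: strict_mono_def)
next
  case (insert c S)
  obtain kk l where kk: "strict_mono kk" "\<forall>c'\<in>S. (\<lambda>m. x (kk m) c') \<longlonglongrightarrow> l c'"
    using insert by auto
  have "bounded (range (\<lambda>m. x (kk m) c))"
    unfolding bounded_iff using insert.prems by auto
  then obtain l0 r where r: "strict_mono r" "((\<lambda>m. x (kk m) c) \<circ> r) \<longlonglongrightarrow> l0"
    using bounded_imp_convergent_subsequence by blast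
  have "(\<lambda>m. x ((kk \<circ> r) m) c') \<longlonglongrightarrow> (l(c := l0)) c'" if "c' \<in> insert c S" for c'
  proof (cases "c' = c")
    case False
    then have "((\<lambda>m. x (kk m) c') \<circ> r) \<longlonglongrightarrow> l c'"
      using kk(2) r(1) that by (intro LIMSEQ_subseq_LIMSEQ) auto
    then show ?thesis using False by (simp add: o_def)
  qed (use r(2) in \<open>simp add: o_def\<close>)
  then show ?case using strict_mono_o[OF kk(1) r(1)] by blast
qed

definition valid_joint_pol :: "nat \<Rightarrow> (nat \<Rightarrow> 'a set) \<Rightarrow> (nat \<Rightarrow> 's \<Rightarrow> 'a \<Rightarrow> real) \<Rightarrow> bool" where
  "valid_joint_pol n A \<pi> \<longleftrightarrow> (\<forall>q<n. valid_agent_pol A q (\<pi> q))"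

lemma valid_joint_pol_fun_upd:
  "valid_joint_pol n A \<pi> \<Longrightarrow> valid_agent_pol A i p \<Longrightarrow> valid_joint_pol n A (\<pi>(i := p))"
  by (simp add: valid_joint_pol_def)

lemma valid_agent_pol_le_1:
  assumes "finite (A i)" "valid_agent_pol A i p" "b \<in> A i"
  shows "p s b \<le> 1"
  using assms member_le_sum[of b "A i" "p s"] by (auto simp: valid_agent_pol_def)

lemma Jret_cong:
  assumes "\<forall>q<n. \<pi> q = \<pi>' q"
  shows "Jret n A P r \<gamma> d \<pi> = Jret n A P r \<gamma> d \<pi>'"
proof -
  have "jprob n \<pi> = jprob n \<pi>'"
    using assms by (intro ext) (simp add: jprob_def)
  then show ?thesis unfolding Jret_def ret_def Ppol_def rpol_def by simp
qed

lemma finite_UNIV_obtains_max: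
  fixes f :: "'s::finite \<Rightarrow> 'b::linorder"
  obtains s0 where "\<And>s. f s \<le> f s0"
proof -
  have fin: "finite (range f)" by simp
  obtain s0 where "f s0 = Max (range f)"
    using Max_in[OF fin] by (metis UNIV_not_empty empty_is_image imageE)
  with fin show ?thesis by (intro that[of s0]) simp
qed

lemma prod_fun_upd_remove:
  assumes "finite I" "i \<in> I"
  shows "(\<Prod>q\<in>I. G q ((f(i := h)) q)) = G i h * (\<Prod>q\<in>I-{i}. G q (f q) :: 'c::comm_monoid_mult)"
proof -
  have "(\<Prod>q\<in>I. G q ((f(i := h)) q)) = G i h * (\<Prod>q\<in>I-{i}. G q ((f(i := h)) q))"
    using assms by (subst prod.remove[of I i]) auto
  also have "(\<Prod>q\<in>I-{i}. G q ((f(i := h)) q)) = (\<Prod>q\<in>I-{i}. G q (f q))"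
    by (rule prod.cong) auto
  finally show ?thesis .
qed

locale markov_game =
  fixes n :: nat and A :: "nat \<Rightarrow> 'a set" and P :: "'s::finite \<Rightarrow> (nat \<Rightarrow> 'a) \<Rightarrow> 's \<Rightarrow> real"
    and r :: "'s \<Rightarrow> (nat \<Rightarrow> 'a) \<Rightarrow> real" and \<gamma> Rmax :: real
  assumes A_fin: "\<forall>i<n. finite (A i) \<and> A i \<noteq> {}"
    and P_stoch: "\<forall>s. \<forall>a\<in>JA n A. (\<forall>s'. 0 \<le> P s a s') \<and> (\<Sum>s'\<in>UNIV. P s a s') = 1"
    and r_bound: "\<forall>s. \<forall>a\<in>JA n A. \<bar>r s a\<bar> \<le> Rmax"
    and gamma_nonneg: "0 \<le> \<gamma>" and gamma_less_1: "\<gamma> < 1"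
begin

lemma finite_JA: "finite (JA n A)"
  unfolding JA_def using A_fin by (intro finite_PiE) auto

lemma JA_nonempty: "JA n A \<noteq> {}"
  unfolding JA_def using A_fin by (auto simp: PiE_eq_empty_iff)

lemma JA_memD: "a \<in> JA n A \<Longrightarrow> q < n \<Longrightarrow> a q \<in> A q"
  unfolding JA_def by (auto simp: PiE_iff)

lemma sum_JA_prod: "(\<Sum>a\<in>JA n A. \<Prod>q<n. f q (a q)) = (\<Prod>q<n. \<Sum>b\<in>A q. f q b :: real)"
  unfolding JA_def using prod_sum_PiE[of "{..<n}" A f] A_fin by auto

lemma sum_JA_factor:
  assumes "i < n"
  shows "(\<Sum>a\<in>JA n A. h (a i) * (\<Prod>q\<in>{..<n}-{i}. f q (a q)))
       = (\<Sum>b\<in>A i. h b) * (\<Prod>q\<in>{..<n}-{i}. \<Sum>b\<in>A q. f q b :: real)"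
proof -
  define f' where "f' = f(i := h)"
  have "(\<Prod>q<n. f' q (a q)) = h (a i) * (\<Prod>q\<in>{..<n}-{i}. f q (a q))" for a
    unfolding f'_def using prod_fun_upd_remove[of "{..<n}" i "\<lambda>q x. x (a q)"] assms by simp
  moreover have "(\<Prod>q<n. \<Sum>b\<in>A q. f' q b) = (\<Sum>b\<in>A i. h b) * (\<Prod>q\<in>{..<n}-{i}. \<Sum>b\<in>A q. f q b)"
    unfolding f'_def using prod_fun_upd_remove[of "{..<n}" i "\<lambda>q x. \<Sum>b\<in>A q. x b"] assms by simp
  ultimately show ?thesis using sum_JA_prod[of f'] by simp
qed

lemma sum_JA_factor_valid:
  assumes "i < n" "valid_joint_pol n A \<pi>"
  shows "(\<Sum>a\<in>JA n A. h (a i) * (\<Prod>q\<in>{..<n}-{i}. \<pi> q s (a q))) = (\<Sum>b\<in>A i. h b)"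
proof -
  have "(\<Prod>q\<in>{..<n}-{i}. \<Sum>b\<in>A q. \<pi> q s b) = 1"
    using assms(2) by (intro prod.neutral) (auto simp: valid_joint_pol_def valid_agent_pol_def)
  then show ?thesis using sum_JA_factor[OF assms(1), of h "\<lambda>q. \<pi> q s"] by simp
qed

lemma jprob_fun_upd:
  assumes "i < n"
  shows "jprob n (\<pi>(i := p)) s a = p s (a i) * (\<Prod>q\<in>{..<n}-{i}. \<pi> q s (a q))"
  unfolding jprob_def using prod_fun_upd_remove[of "{..<n}" i "\<lambda>q x. x s (a q)"] assms by simp

lemma jprob_split: "i < n \<Longrightarrow> jprob n \<pi> s a = \<pi> i s (a i) * (\<Prod>q\<in>{..<n}-{i}. \<pi> q s (a q))"
  using jprob_fun_upd[of i \<pi> "\<pi> i"] by simp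

lemma jprob_nonneg: "valid_joint_pol n A \<pi> \<Longrightarrow> a \<in> JA n A \<Longrightarrow> 0 \<le> jprob n \<pi> s a"
  unfolding jprob_def valid_joint_pol_def valid_agent_pol_def by (auto intro!: prod_nonneg JA_memD)

lemma sum_jprob: "valid_joint_pol n A \<pi> \<Longrightarrow> (\<Sum>a\<in>JA n A. jprob n \<pi> s a) = 1"
  unfolding jprob_def using sum_JA_prod[of "\<lambda>q b. \<pi> q s b"]
  by (simp add: valid_joint_pol_def valid_agent_pol_def)

lemma stochastic_Ppol:
  assumes "valid_joint_pol n A \<pi>"
  shows "stochastic (Ppol n A P \<pi>)"
proof -
  have "(\<Sum>s'\<in>UNIV. Ppol n A P \<pi> s s') = (\<Sum>a\<in>JA n A. jprob n \<pi> s a * (\<Sum>s'\<in>UNIV. P s a s'))" for s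
    unfolding Ppol_def by (subst sum.swap) (simp add: sum_distrib_left)
  moreover have "0 \<le> Ppol n A P \<pi> s s'" for s s'
    unfolding Ppol_def using P_stoch jprob_nonneg[OF assms] by (auto intro!: sum_nonneg)
  ultimately show ?thesis
    using P_stoch sum_jprob[OF assms] by (simp add: stochastic_def cong: sum.cong)
qed

lemma discounted_chain_Ppol: "valid_joint_pol n A \<pi> \<Longrightarrow> discounted_chain (Ppol n A P \<pi>) \<gamma>"
  using stochastic_Ppol gamma_nonneg gamma_less_1 by unfold_locales

lemma rpol_bound:
  assumes "valid_joint_pol n A \<pi>"
  shows "\<bar>rpol n A r \<pi> s\<bar> \<le> Rmax"
proof -
  have "\<bar>rpol n A r \<pi> s\<bar> \<le> (\<Sum>a\<in>JA n A. jprob n \<pi> s a * \<bar>r s a\<bar>)"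
    unfolding rpol_def using jprob_nonneg[OF assms]
    by (intro order_trans[OF sum_abs]) (simp add: abs_mult)
  also have "\<dots> \<le> (\<Sum>a\<in>JA n A. jprob n \<pi> s a * Rmax)"
    using jprob_nonneg[OF assms] r_bound by (intro sum_mono mult_left_mono) auto
  also have "\<dots> = Rmax" using sum_jprob[OF assms] by (simp add: sum_distrib_right[symmetric])
  finally show ?thesis .
qed

lemma Jret_eq_disc_sum: "Jret n A P r \<gamma> d \<pi> = disc_sum (Ppol n A P \<pi>) (rpol n A r \<pi>) d \<gamma>"
  by (simp add: Jret_def ret_def disc_sum_def)

lemma Vfun_eq_disc_sum: "Vfun n A P r \<gamma> \<pi> s = disc_sum (Ppol n A P \<pi>) (rpol n A r \<pi>) (dirac s) \<gamma>"
  by (simp add: Vfun_def ret_def disc_sum_def dirac_def)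

lemma Jret_eq_expected_Vfun:
  assumes "valid_joint_pol n A \<pi>"
  shows "Jret n A P r \<gamma> d \<pi> = (\<Sum>s\<in>UNIV. d s * Vfun n A P r \<gamma> \<pi> s)"
  unfolding Jret_eq_disc_sum Vfun_eq_disc_sum
  by (rule discounted_chain.disc_sum_linear[OF discounted_chain_Ppol[OF assms] rpol_bound[OF assms]])

lemma Qfun_eq:
  assumes "valid_joint_pol n A \<pi>"
  shows "Qfun n A P r \<gamma> \<pi> s a = r s a + \<gamma> * (\<Sum>s'\<in>UNIV. P s a s' * Vfun n A P r \<gamma> \<pi> s')"
  unfolding Qfun_def Jret_eq_expected_Vfun[OF assms, symmetric] by (simp add: Jret_def)

lemma Vfun_bellman:
  assumes "valid_joint_pol n A \<pi>"
  shows "Vfun n A P r \<gamma> \<pi> s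
       = rpol n A r \<pi> s + \<gamma> * (\<Sum>s'\<in>UNIV. Ppol n A P \<pi> s s' * Vfun n A P r \<gamma> \<pi> s')"
  unfolding Vfun_eq_disc_sum
  by (rule discounted_chain.disc_sum_bellman[OF discounted_chain_Ppol[OF assms] rpol_bound[OF assms]])

lemma expected_Qfun:
  assumes "valid_joint_pol n A \<pi>"
  shows "(\<Sum>a\<in>JA n A. jprob n \<pi>' s a * Qfun n A P r \<gamma> \<pi> s a)
     = rpol n A r \<pi>' s + \<gamma> * (\<Sum>s'\<in>UNIV. Ppol n A P \<pi>' s s' * Vfun n A P r \<gamma> \<pi> s')"
proof -
  let ?V = "Vfun n A P r \<gamma> \<pi>"
  have "(\<Sum>a\<in>JA n A. jprob n \<pi>' s a * Qfun n A P r \<gamma> \<pi> s a)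
      = rpol n A r \<pi>' s + \<gamma> * (\<Sum>a\<in>JA n A. \<Sum>s'\<in>UNIV. jprob n \<pi>' s a * P s a s' * ?V s')"
    unfolding Qfun_eq[OF assms] rpol_def
    by (simp add: algebra_simps sum.distrib sum_distrib_left)
  also have "(\<Sum>a\<in>JA n A. \<Sum>s'\<in>UNIV. jprob n \<pi>' s a * P s a s' * ?V s')
      = (\<Sum>s'\<in>UNIV. Ppol n A P \<pi>' s s' * ?V s')"
    unfolding Ppol_def sum_distrib_right by (rule sum.swap)
  finally show ?thesis .
qed

lemma Jret_le:
  assumes "valid_joint_pol n A \<pi>" "prob_vec d"
  shows "Jret n A P r \<gamma> d \<pi> \<le> Rmax / (1 - \<gamma>)"
proof -
  interpret discounted_chain "Ppol n A P \<pi>" \<gamma> by (rule discounted_chain_Ppol[OF assms(1)])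
  have gs: "(\<lambda>t. Rmax * \<gamma> ^ t) sums (Rmax * (1 / (1 - \<gamma>)))"
    using gamma_nonneg gamma_less_1 by (intro sums_mult geometric_sums) auto
  have "Jret n A P r \<gamma> d \<pi> \<le> (\<Sum>t. Rmax * \<gamma> ^ t)"
    unfolding Jret_eq_disc_sum disc_sum_def
  proof (rule suminf_le[OF _ summable_disc_sum[OF assms(2) rpol_bound[OF assms(1)]] sums_summable[OF gs]])
    fix t
    have "\<bar>\<Sum>s\<in>UNIV. sdist (Ppol n A P \<pi>) d t s * rpol n A r \<pi> s\<bar> \<le> Rmax"
      by (rule abs_expectation_le[OF prob_vec_sdist[OF stochastic assms(2)] rpol_bound[OF assms(1)]])
    from mult_left_mono[OF abs_le_D1[OF this] zero_le_power[OF gamma_nonneg]]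
    show "\<gamma> ^ t * (\<Sum>s\<in>UNIV. sdist (Ppol n A P \<pi>) d t s * rpol n A r \<pi> s) \<le> Rmax * \<gamma> ^ t"
      by (simp add: mult.commute)
  qed
  also have "\<dots> = Rmax / (1 - \<gamma>)" using sums_unique[OF gs] by simp
  finally show ?thesis .
qed

lemma expected_Qi:
  assumes i: "i < n"
  shows "(\<Sum>ai\<in>A i. p s ai * Qi n A P r \<gamma> \<pi> i s ai)
       = (\<Sum>a\<in>JA n A. jprob n (\<pi>(i := p)) s a * Qfun n A P r \<gamma> \<pi> s a)"
proof -
  define X where "X a = (\<Prod>q\<in>{..<n}-{i}. \<pi> q s (a q)) * Qfun n A P r \<gamma> \<pi> s a" for a
  have "(\<Sum>ai\<in>A i. p s ai * Qi n A P r \<gamma> \<pi> i s ai)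
      = (\<Sum>ai\<in>A i. \<Sum>a\<in>JA n A. if a i = ai then p s ai * X a else 0)"
    unfolding Qi_def sum.inter_filter[OF finite_JA] X_def
    by (simp add: sum_distrib_left if_distrib cong: if_cong)
  also have "\<dots> = (\<Sum>a\<in>JA n A. \<Sum>ai\<in>A i. if a i = ai then p s ai * X a else 0)"
    by (rule sum.swap)
  also have "\<dots> = (\<Sum>a\<in>JA n A. p s (a i) * X a)"
    using JA_memD[OF _ i] A_fin i by (intro sum.cong refl) (simp add: sum.delta')
  also have "\<dots> = (\<Sum>a\<in>JA n A. jprob n (\<pi>(i := p)) s a * Qfun n A P r \<gamma> \<pi> s a)"
    unfolding X_def jprob_fun_upd[OF i] by (simp add: mult.assoc)
  finally show ?thesis .
qed

lemma expected_Ai: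
  assumes i: "i < n" and \<pi>: "valid_joint_pol n A \<pi>" and p: "valid_agent_pol A i p"
  shows "(\<Sum>ai\<in>A i. p s ai * Ai n A P r \<gamma> \<pi> i s ai)
       = (\<Sum>a\<in>JA n A. jprob n (\<pi>(i := p)) s a * Advfun n A P r \<gamma> \<pi> s a)"
proof -
  have "(\<Sum>ai\<in>A i. p s ai) = 1" using p by (simp add: valid_agent_pol_def)
  moreover have "(\<Sum>a\<in>JA n A. jprob n (\<pi>(i := p)) s a) = 1"
    by (rule sum_jprob[OF valid_joint_pol_fun_upd[OF \<pi> p]])
  ultimately show ?thesis
    unfolding Ai_def Advfun_def right_diff_distrib sum_subtractf sum_distrib_right[symmetric]
      expected_Qi[OF i] by simp
qed

lemma sum_visit_mult:
  assumes d: "prob_vec d" and \<pi>: "valid_joint_pol n A \<pi>"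
  shows "(\<Sum>s\<in>UNIV. visit n A P \<gamma> d \<pi> s * h s) = disc_sum (Ppol n A P \<pi>) h d \<gamma>"
proof -
  let ?D = "sdist (Ppol n A P \<pi>) d"
  have sm: "summable (\<lambda>t. \<gamma> ^ t * ?D t s)" for s
    using gamma_nonneg gamma_less_1 prob_vec_abs_le_1[OF prob_vec_sdist[OF stochastic_Ppol[OF \<pi>] d]]
    by (rule summable_geometric_bounded)
  have "(\<Sum>s\<in>UNIV. visit n A P \<gamma> d \<pi> s * h s) = (\<Sum>s\<in>UNIV. \<Sum>t. \<gamma> ^ t * ?D t s * h s)"
    unfolding visit_def using sm by (intro sum.cong refl suminf_mult2)
  also have "\<dots> = (\<Sum>t. \<Sum>s\<in>UNIV. \<gamma> ^ t * ?D t s * h s)"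
    using sm by (intro suminf_sum[symmetric] summable_mult2)
  finally show ?thesis
    unfolding disc_sum_def by (simp add: sum_distrib_left mult.assoc)
qed

lemma abs_Advfun_le_epsA: "a \<in> JA n A \<Longrightarrow> \<bar>Advfun n A P r \<gamma> \<pi> s a\<bar> \<le> epsA n A P r \<gamma> \<pi>"
proof -
  have "{\<bar>Advfun n A P r \<gamma> \<pi> s a\<bar> | s a. a \<in> JA n A}
      = (\<lambda>(s, a). \<bar>Advfun n A P r \<gamma> \<pi> s a\<bar>) ` (UNIV \<times> JA n A)"
    by auto
  then show "a \<in> JA n A \<Longrightarrow> ?thesis"
    unfolding epsA_def using finite_JA by (intro Max_ge) auto
qed

lemma epsA_nonneg: "0 \<le> epsA n A P r \<gamma> \<pi>"
  using JA_nonempty abs_Advfun_le_epsA by (meson abs_ge_zero all_not_in_conv order_trans)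

lemma expected_Advfun_self:
  assumes "valid_joint_pol n A \<pi>"
  shows "(\<Sum>a\<in>JA n A. jprob n \<pi> s a * Advfun n A P r \<gamma> \<pi> s a) = 0"
  using expected_Qfun[OF assms, of \<pi> s] Vfun_bellman[OF assms, of s] sum_jprob[OF assms, of s]
  unfolding Advfun_def right_diff_distrib sum_subtractf sum_distrib_right[symmetric] by simp

lemma L1_jprob_fun_upd:
  assumes i: "i < n" and \<pi>: "valid_joint_pol n A \<pi>"
  shows "(\<Sum>a\<in>JA n A. \<bar>jprob n (\<pi>(i := p)) s a - jprob n \<pi> s a\<bar>) = (\<Sum>b\<in>A i. \<bar>p s b - \<pi> i s b\<bar>)"
proof -
  have "0 \<le> (\<Prod>q\<in>{..<n}-{i}. \<pi> q s (a q))" if "a \<in> JA n A" for a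
    using \<pi> that unfolding valid_joint_pol_def valid_agent_pol_def by (auto intro!: prod_nonneg JA_memD)
  then have "(\<Sum>a\<in>JA n A. \<bar>jprob n (\<pi>(i := p)) s a - jprob n \<pi> s a\<bar>)
     = (\<Sum>a\<in>JA n A. \<bar>p s (a i) - \<pi> i s (a i)\<bar> * (\<Prod>q\<in>{..<n}-{i}. \<pi> q s (a q)))"
    unfolding jprob_fun_upd[OF i] jprob_split[OF i, of \<pi>]
    by (intro sum.cong) (simp_all add: left_diff_distrib[symmetric] abs_mult)
  also have "\<dots> = (\<Sum>b\<in>A i. \<bar>p s b - \<pi> i s b\<bar>)"
    by (rule sum_JA_factor_valid[OF i \<pi>])
  finally show ?thesis .
qed

text \<open>The expected advantage vanishes under \<open>\<pi>\<close> itself, so only the change in the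
  action distribution is paid for.\<close>
lemma abs_expected_Advfun_le:
  assumes i: "i < n" and \<pi>: "valid_joint_pol n A \<pi>"
  shows "\<bar>\<Sum>a\<in>JA n A. jprob n (\<pi>(i := p)) s a * Advfun n A P r \<gamma> \<pi> s a\<bar>
     \<le> epsA n A P r \<gamma> \<pi> * (\<Sum>b\<in>A i. \<bar>p s b - \<pi> i s b\<bar>)"
proof -
  let ?Ad = "Advfun n A P r \<gamma> \<pi> s" and ?\<epsilon> = "epsA n A P r \<gamma> \<pi>"
  have "(\<Sum>a\<in>JA n A. jprob n (\<pi>(i := p)) s a * ?Ad a)
      = (\<Sum>a\<in>JA n A. (jprob n (\<pi>(i := p)) s a - jprob n \<pi> s a) * ?Ad a)"
    using expected_Advfun_self[OF \<pi>, of s] by (simp add: sum_subtractf left_diff_distrib)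
  also have "\<bar>\<dots>\<bar> \<le> (\<Sum>a\<in>JA n A. \<bar>jprob n (\<pi>(i := p)) s a - jprob n \<pi> s a\<bar> * ?\<epsilon>)"
    using abs_Advfun_le_epsA
    by (intro order_trans[OF sum_abs] sum_mono) (simp add: abs_mult mult_left_mono)
  also have "\<dots> = ?\<epsilon> * (\<Sum>b\<in>A i. \<bar>p s b - \<pi> i s b\<bar>)"
    unfolding sum_distrib_right[symmetric] L1_jprob_fun_upd[OF i \<pi>] by simp
  finally show ?thesis .
qed

lemma L1_Ppol_fun_upd:
  assumes i: "i < n" and \<pi>: "valid_joint_pol n A \<pi>"
  shows "(\<Sum>s'\<in>UNIV. \<bar>Ppol n A P (\<pi>(i := p)) s s' - Ppol n A P \<pi> s s'\<bar>) \<le> (\<Sum>b\<in>A i. \<bar>p s b - \<pi> i s b\<bar>)"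
proof -
  let ?j = "\<lambda>a. jprob n (\<pi>(i := p)) s a - jprob n \<pi> s a"
  have "(\<Sum>s'\<in>UNIV. \<bar>Ppol n A P (\<pi>(i := p)) s s' - Ppol n A P \<pi> s s'\<bar>)
      = (\<Sum>s'\<in>UNIV. \<bar>\<Sum>a\<in>JA n A. ?j a * P s a s'\<bar>)"
    unfolding Ppol_def by (simp add: sum_subtractf left_diff_distrib)
  also have "\<dots> \<le> (\<Sum>s'\<in>UNIV. \<Sum>a\<in>JA n A. \<bar>?j a\<bar> * P s a s')"
    using P_stoch by (intro sum_mono order_trans[OF sum_abs]) (auto simp: abs_mult)
  also have "\<dots> = (\<Sum>a\<in>JA n A. \<bar>?j a\<bar> * (\<Sum>s'\<in>UNIV. P s a s'))"
    by (subst sum.swap) (simp add: sum_distrib_left)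
  also have "\<dots> = (\<Sum>a\<in>JA n A. \<bar>?j a\<bar>)"
    using P_stoch by (intro sum.cong) auto
  also have "\<dots> = (\<Sum>b\<in>A i. \<bar>p s b - \<pi> i s b\<bar>)" by (rule L1_jprob_fun_upd[OF i \<pi>])
  finally show ?thesis .
qed

lemma performance_difference:
  assumes d: "prob_vec d" and \<pi>: "valid_joint_pol n A \<pi>" and \<pi>': "valid_joint_pol n A \<pi>'"
  shows "Jret n A P r \<gamma> d \<pi>' - Jret n A P r \<gamma> d \<pi>
       = disc_sum (Ppol n A P \<pi>') (\<lambda>s. \<Sum>a\<in>JA n A. jprob n \<pi>' s a * Advfun n A P r \<gamma> \<pi> s a) d \<gamma>"
proof -
  interpret discounted_chain "Ppol n A P \<pi>'" \<gamma> by (rule discounted_chain_Ppol[OF \<pi>'])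
  let ?V = "Vfun n A P r \<gamma> \<pi>"
  have adv: "(\<Sum>a\<in>JA n A. jprob n \<pi>' s a * Advfun n A P r \<gamma> \<pi> s a)
      = rpol n A r \<pi>' s + \<gamma> * (\<Sum>s'\<in>UNIV. Ppol n A P \<pi>' s s' * ?V s') - ?V s" for s
    using expected_Qfun[OF \<pi>, of \<pi>' s] sum_jprob[OF \<pi>', of s]
    unfolding Advfun_def right_diff_distrib sum_subtractf sum_distrib_right[symmetric] by simp
  have "(\<lambda>t. \<gamma> ^ t * (\<Sum>s\<in>UNIV. sdist (Ppol n A P \<pi>') d t s
        * (\<Sum>a\<in>JA n A. jprob n \<pi>' s a * Advfun n A P r \<gamma> \<pi> s a)))
      sums (Jret n A P r \<gamma> d \<pi>' - Jret n A P r \<gamma> d \<pi>)"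
    unfolding adv Jret_eq_expected_Vfun[OF \<pi>]
    unfolding Jret_eq_disc_sum by (rule disc_sum_telescope[OF d rpol_bound[OF \<pi>']])
  then show ?thesis unfolding disc_sum_def by (simp add: sums_iff)
qed

lemma surr_eq_disc_sum:
  assumes "i < n" "prob_vec d" "valid_joint_pol n A \<pi>" "valid_agent_pol A i p"
  shows "surr n A P r \<gamma> d \<pi> i p
       = disc_sum (Ppol n A P \<pi>) (\<lambda>s. \<Sum>a\<in>JA n A. jprob n (\<pi>(i := p)) s a * Advfun n A P r \<gamma> \<pi> s a) d \<gamma>"
  unfolding surr_def expected_Ai[OF assms(1,3,4)] by (rule sum_visit_mult[OF assms(2,3)])

text \<open>Single-agent form of the TRPO bound.  With \<open>\<delta>\<close> the largest L1 change of agent \<open>i\<close>'s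
  action distribution, the surrogate misses the improvement by at most
  \<open>\<gamma> \<epsilon> \<delta>\<^sup>2 / (1 - \<gamma>)\<^sup>2 = C \<delta>\<^sup>2 / 4\<close>, and \<open>\<delta>\<^sup>2 / 4\<close> is dominated by the maximal KL divergence.\<close>
lemma policy_improvement_bound:
  assumes i: "i < n" and d: "prob_vec d" and \<pi>: "valid_joint_pol n A \<pi>" and p: "valid_agent_pol A i p"
  shows "Fobj n A P r \<gamma> d \<pi> i p \<le> ereal (Jret n A P r \<gamma> d (\<pi>(i := p)) - Jret n A P r \<gamma> d \<pi>)"
proof -
  interpret discounted_chain "Ppol n A P \<pi>" \<gamma> by (rule discounted_chain_Ppol[OF \<pi>])
  have \<pi>': "valid_joint_pol n A (\<pi>(i := p))" by (rule valid_joint_pol_fun_upd[OF \<pi> p])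
  define \<delta>s where "\<delta>s s = (\<Sum>b\<in>A i. \<bar>p s b - \<pi> i s b\<bar>)" for s
  obtain s0 where s0: "\<And>s. \<delta>s s \<le> \<delta>s s0" using finite_UNIV_obtains_max[of \<delta>s] by blast
  define \<delta> where "\<delta> = \<delta>s s0"
  define \<epsilon> where "\<epsilon> = epsA n A P r \<gamma> \<pi>"
  define S where "S = surr n A P r \<gamma> d \<pi> i p"
  define C where "C = Cpen n A P r \<gamma> \<pi>"
  have "\<bar>(\<Sum>a\<in>JA n A. jprob n (\<pi>(i := p)) s a * Advfun n A P r \<gamma> \<pi> s a)\<bar> \<le> \<epsilon> * \<delta>" for s
    using abs_expected_Advfun_le[OF i \<pi>, of p s] mult_left_mono[OF s0[of s] epsA_nonneg[of \<pi>]]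
    unfolding \<epsilon>_def \<delta>_def \<delta>s_def by linarith
  moreover have "(\<Sum>s'\<in>UNIV. \<bar>Ppol n A P (\<pi>(i := p)) s s' - Ppol n A P \<pi> s s'\<bar>) \<le> \<delta>" for s
    using L1_Ppol_fun_upd[OF i \<pi>, of p s] s0[of s] unfolding \<delta>_def \<delta>s_def by linarith
  ultimately have "\<bar>Jret n A P r \<gamma> d (\<pi>(i := p)) - Jret n A P r \<gamma> d \<pi> - S\<bar> \<le> \<gamma> * \<delta> * (\<epsilon> * \<delta>) / (1 - \<gamma>)\<^sup>2"
    unfolding performance_difference[OF d \<pi> \<pi>'] S_def surr_eq_disc_sum[OF i d \<pi> p]
    by (rule disc_sum_perturbation[OF stochastic_Ppol[OF \<pi>'] d])
  also have "\<dots> = C * (\<delta>\<^sup>2 / 4)"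
    unfolding C_def Cpen_def \<epsilon>_def[symmetric] by (simp add: field_simps power2_eq_square)
  finally have gap: "S - C * (\<delta>\<^sup>2 / 4) \<le> Jret n A P r \<gamma> d (\<pi>(i := p)) - Jret n A P r \<gamma> d \<pi>"
    by linarith
  have "0 \<le> C" unfolding C_def Cpen_def using gamma_nonneg epsA_nonneg by simp
  moreover have "ereal (\<delta>\<^sup>2 / 4) \<le> DmaxKL A i (\<pi> i) p"
    unfolding \<delta>_def \<delta>s_def using A_fin i \<pi> p
    by (intro L1_sq_le_DmaxKL) (auto simp: valid_joint_pol_def)
  ultimately have "Fobj n A P r \<gamma> d \<pi> i p \<le> ereal S - ereal C * ereal (\<delta>\<^sup>2 / 4)"
    unfolding Fobj_def S_def C_def by (intro ereal_minus_mono order_refl ereal_mult_left_mono) simp_all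
  with gap show ?thesis by (simp add: order_trans)
qed

lemma Fobj_self:
  assumes "i < n" "prob_vec d" "valid_joint_pol n A \<pi>"
  shows "Fobj n A P r \<gamma> d \<pi> i (\<pi> i) = 0"
proof -
  have "valid_agent_pol A i (\<pi> i)" using assms by (simp add: valid_joint_pol_def)
  from expected_Ai[OF assms(1,3) this] have "surr n A P r \<gamma> d \<pi> i (\<pi> i) = 0"
    unfolding surr_def using expected_Advfun_self[OF assms(3)] by simp
  then show ?thesis unfolding Fobj_def DmaxKL_self by (simp add: zero_ereal_def)
qed

lemma Jret_tendsto:
  assumes d: "prob_vec d" and valid: "\<And>m. valid_joint_pol n A (\<sigma> m)" and conv: "pol_conv n A \<sigma> \<pi>"
  shows "(\<lambda>m. Jret n A P r \<gamma> d (\<sigma> m)) \<longlonglongrightarrow> Jret n A P r \<gamma> d \<pi>"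
proof -
  have jprob: "(\<lambda>m. jprob n (\<sigma> m) s a) \<longlonglongrightarrow> jprob n \<pi> s a" if "a \<in> JA n A" for s a
    unfolding jprob_def using conv JA_memD[OF that] by (intro tendsto_prod) (auto simp: pol_conv_def)
  have "(\<lambda>m. Ppol n A P (\<sigma> m) s s') \<longlonglongrightarrow> Ppol n A P \<pi> s s'" for s s'
    unfolding Ppol_def using jprob by (intro tendsto_sum tendsto_mult_right) auto
  then have sdist: "(\<lambda>m. sdist (Ppol n A P (\<sigma> m)) d t s) \<longlonglongrightarrow> sdist (Ppol n A P \<pi>) d t s" for t s
    by (rule sdist_tendsto)
  have rpol: "(\<lambda>m. rpol n A r (\<sigma> m) s) \<longlonglongrightarrow> rpol n A r \<pi> s" for s
    unfolding rpol_def using jprob by (intro tendsto_sum tendsto_mult_right) auto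
  define a where "a t m = \<gamma> ^ t * (\<Sum>s\<in>UNIV. sdist (Ppol n A P (\<sigma> m)) d t s * rpol n A r (\<sigma> m) s)" for t m
  define b where "b t = \<gamma> ^ t * (\<Sum>s\<in>UNIV. sdist (Ppol n A P \<pi>) d t s * rpol n A r \<pi> s)" for t
  have "(\<lambda>m. a t m) \<longlonglongrightarrow> b t" for t
    unfolding a_def b_def using sdist rpol by (intro tendsto_mult_left tendsto_sum tendsto_mult) auto
  moreover have "norm (a t m) \<le> Rmax * \<gamma> ^ t" for t m
  proof -
    have "\<bar>\<Sum>s\<in>UNIV. sdist (Ppol n A P (\<sigma> m)) d t s * rpol n A r (\<sigma> m) s\<bar> \<le> Rmax"
      by (rule abs_expectation_le[OF prob_vec_sdist[OF stochastic_Ppol[OF valid] d] rpol_bound[OF valid]])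
    then show ?thesis
      unfolding a_def using gamma_nonneg by (simp add: abs_mult mult.commute[of Rmax] mult_left_mono)
  qed
  moreover have "summable (\<lambda>t. Rmax * \<gamma> ^ t)"
    using gamma_nonneg gamma_less_1 by (intro summable_mult summable_geometric) auto
  ultimately have "(\<lambda>m. suminf (\<lambda>t. a t m)) \<longlonglongrightarrow> suminf b"
    using tannerys_theorem[where M = "\<lambda>t. Rmax * \<gamma> ^ t" and F = sequentially and a = a and b = b]
      always_eventually[of "\<lambda>(t, m). norm (a t m) \<le> Rmax * \<gamma> ^ t"]
    by auto
  then show ?thesis unfolding a_def b_def Jret_eq_disc_sum disc_sum_def .
qed

lemma valid_policies_convergent_subseq:
  fixes \<sigma> :: "nat \<Rightarrow> nat \<Rightarrow> 's \<Rightarrow> 'a \<Rightarrow> real"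
  assumes "\<And>k. valid_joint_pol n A (\<sigma> k)"
  shows "\<exists>\<pi> kk. strict_mono kk \<and> pol_conv n A (\<lambda>m. \<sigma> (kk m)) \<pi>"
proof -
  define S where "S = Sigma {..<n} (\<lambda>q. (UNIV :: 's set) \<times> A q)"
  have fin: "finite S" unfolding S_def using A_fin by (intro finite_SigmaI) auto
  have bound: "\<bar>(\<lambda>(q, s, b). \<sigma> k q s b) c\<bar> \<le> 1" if "c \<in> S" for k c
  proof -
    obtain q s b where c: "c = (q, s, b)" "q < n" "b \<in> A q" using \<open>c \<in> S\<close> by (auto simp: S_def)
    have valid: "valid_agent_pol A q (\<sigma> k q)" using assms c(2) by (simp add: valid_joint_pol_def)
    then have "0 \<le> \<sigma> k q s b" using c(3) by (simp add: valid_agent_pol_def)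
    moreover have "\<sigma> k q s b \<le> 1" using A_fin c(2) valid_agent_pol_le_1[OF _ valid c(3)] by blast
    ultimately show ?thesis using c(1) by simp
  qed
  obtain kk l where "strict_mono kk"
      and "\<forall>c\<in>S. (\<lambda>m. (\<lambda>(q, s, b). \<sigma> (kk m) q s b) c) \<longlonglongrightarrow> l c"
    using bounded_family_convergent_subseq[OF fin, of "\<lambda>k (q, s, b). \<sigma> k q s b", OF bound] by blast
  then have "strict_mono kk \<and> pol_conv n A (\<lambda>m. \<sigma> (kk m)) (\<lambda>q s b. l (q, s, b))"
    by (auto simp: pol_conv_def S_def)
  then show ?thesis by blast
qed

end


section \<open>The interleaved update scheme\<close>

locale interleaved_scheme = markov_game n A P r \<gamma> Rmax
  for n :: nat and A :: "nat \<Rightarrow> 'a set" and P :: "'s::finite \<Rightarrow> (nat \<Rightarrow> 'a) \<Rightarrow> 's \<Rightarrow> real"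
    and r :: "'s \<Rightarrow> (nat \<Rightarrow> 'a) \<Rightarrow> real" and \<gamma> Rmax :: real +
  fixes d :: "'s \<Rightarrow> real" and K :: "nat \<Rightarrow> nat"
    and it :: "nat \<Rightarrow> nat \<Rightarrow> nat \<Rightarrow> 's \<Rightarrow> 'a \<Rightarrow> real"
  assumes d_prob: "prob_vec d"
    and valid_iterates: "\<forall>k. \<forall>i<n. \<forall>j\<le>K i. valid_agent_pol A i (it k i j)"
    and round_transition: "\<forall>k. \<forall>i<n. it (Suc k) i 0 = it k i (K i)"
    and micro_step_argmax: "\<forall>k. \<forall>i<n. \<forall>j<K i. \<forall>p. valid_agent_pol A i p \<longrightarrow>
        Fobj n A P r \<gamma> d (baseline it k i j) i p
          \<le> Fobj n A P r \<gamma> d (baseline it k i j) i (it k i (Suc j))"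
begin

lemma valid_baseline:
  assumes "i < n" "j \<le> K i"
  shows "valid_joint_pol n A (baseline it k i j)"
  using valid_iterates assms unfolding valid_joint_pol_def baseline_def by auto

lemma baseline_Suc: "baseline it k i (Suc j) = (baseline it k i j)(i := it k i (Suc j))"
  by (auto simp: baseline_def)

lemma baseline_next_agent: "i < n \<Longrightarrow> baseline it k (Suc i) 0 = baseline it k i (K i)"
  using round_transition by (auto simp: baseline_def)

text \<open>Since the old policy is a feasible choice with \<open>F = 0\<close>, the maximiser has \<open>F \<ge> 0\<close>,
  and \<open>F\<close> bounds the improvement from below.\<close>
lemma Jret_baseline_Suc:
  assumes i: "i < n" and j: "j < K i"
  shows "Jret n A P r \<gamma> d (baseline it k i j) \<le> Jret n A P r \<gamma> d (baseline it k i (Suc j))"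
proof -
  let ?B = "baseline it k i j"
  have B: "valid_joint_pol n A ?B" using valid_baseline i j by simp
  have p: "valid_agent_pol A i (it k i (Suc j))" using valid_iterates i j by simp
  have Bi: "?B i = it k i j" by (simp add: baseline_def)
  have "ereal 0 = Fobj n A P r \<gamma> d ?B i (?B i)"
    using Fobj_self[OF i d_prob B] by (simp add: zero_ereal_def)
  also have "\<dots> \<le> Fobj n A P r \<gamma> d ?B i (it k i (Suc j))"
    unfolding Bi using micro_step_argmax valid_iterates i j by auto
  also have "\<dots> \<le> ereal (Jret n A P r \<gamma> d (?B(i := it k i (Suc j))) - Jret n A P r \<gamma> d ?B)"
    by (rule policy_improvement_bound[OF i d_prob B p])
  finally show ?thesis unfolding baseline_Suc by simp
qed

lemma Jret_baseline_agent:
  assumes i: "i < n"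
  shows "Jret n A P r \<gamma> d (baseline it k i 0) \<le> Jret n A P r \<gamma> d (baseline it k i (K i))"
proof -
  have "Jret n A P r \<gamma> d (baseline it k i 0) \<le> Jret n A P r \<gamma> d (baseline it k i j)" if "j \<le> K i" for j
    using that
  proof (induction j)
    case (Suc j)
    then show ?case using Jret_baseline_Suc[OF i, of j k] by simp
  qed simp
  then show ?thesis by simp
qed

lemma incseq_Jret_rounds: "incseq (\<lambda>k. Jret n A P r \<gamma> d (\<lambda>i. it k i 0))"
proof (rule incseq_SucI)
  fix k
  have "Jret n A P r \<gamma> d (baseline it k 0 0) \<le> Jret n A P r \<gamma> d (baseline it k i 0)" if "i \<le> n" for i
    using that
  proof (induction i)
    case (Suc i)
    then show ?case using Jret_baseline_agent[of i k] baseline_next_agent[of i k] by simp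
  qed simp
  moreover have "baseline it k 0 0 = (\<lambda>i. it k i 0)" by (auto simp: baseline_def)
  moreover have "Jret n A P r \<gamma> d (baseline it k n 0) = Jret n A P r \<gamma> d (\<lambda>i. it (Suc k) i 0)"
    by (rule Jret_cong) (simp add: baseline_def)
  ultimately show "Jret n A P r \<gamma> d (\<lambda>i. it k i 0) \<le> Jret n A P r \<gamma> d (\<lambda>i. it (Suc k) i 0)"
    by (metis order_refl)
qed

end

theorem corollary1:
  fixes n :: nat
    and A :: "nat \<Rightarrow> 'a set"
    and P :: "'s::finite \<Rightarrow> (nat \<Rightarrow> 'a) \<Rightarrow> 's \<Rightarrow> real"
    and r :: "'s \<Rightarrow> (nat \<Rightarrow> 'a) \<Rightarrow> real"
    and d :: "'s \<Rightarrow> real"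
    and \<gamma> Rmax :: real
    and K :: "nat \<Rightarrow> nat"
    and it :: "nat \<Rightarrow> nat \<Rightarrow> nat \<Rightarrow> 's \<Rightarrow> 'a \<Rightarrow> real"
  assumes A_fin: "\<forall>i<n. finite (A i) \<and> A i \<noteq> {}"
    and P_stoch: "\<forall>s. \<forall>a\<in>JA n A. (\<forall>s'. 0 \<le> P s a s') \<and> (\<Sum>s'\<in>UNIV. P s a s') = 1"
    and d_dist: "(\<forall>s. 0 \<le> d s) \<and> (\<Sum>s\<in>UNIV. d s) = 1"
    and r_bound: "\<forall>s. \<forall>a\<in>JA n A. \<bar>r s a\<bar> \<le> Rmax"
    and gamma: "0 \<le> \<gamma>" "\<gamma> < 1"
    and K_pos: "\<forall>i<n. 1 \<le> K i"
    and valid: "\<forall>k. \<forall>i<n. \<forall>j\<le>K i. valid_agent_pol A i (it k i j)"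
    and next_round: "\<forall>k. \<forall>i<n. it (Suc k) i 0 = it k i (K i)"
    and argmax: "\<forall>k. \<forall>i<n. \<forall>j<K i. \<forall>p. valid_agent_pol A i p \<longrightarrow>
        Fobj n A P r \<gamma> d (baseline it k i j) i p
          \<le> Fobj n A P r \<gamma> d (baseline it k i j) i (it k i (Suc j))"
  shows "(\<exists>Jbar::real. (\<lambda>k. Jret n A P r \<gamma> d (\<lambda>i. it k i 0)) \<longlonglongrightarrow> Jbar \<and>
            (\<exists>\<pi>bar kk. strict_mono kk \<and> pol_conv n A (\<lambda>m. \<lambda>i. it (kk m) i 0) \<pi>bar) \<and>
            (\<forall>\<pi>bar kk. strict_mono kk \<and> pol_conv n A (\<lambda>m. \<lambda>i. it (kk m) i 0) \<pi>bar
                 \<longrightarrow> Jret n A P r \<gamma> d \<pi>bar = Jbar))"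
proof -
  interpret scheme: interleaved_scheme n A P r \<gamma> Rmax d K it
    by unfold_locales (use assms in \<open>simp_all add: prob_vec_def\<close>)
  have valid_rounds: "valid_joint_pol n A (\<lambda>i. it k i 0)" for k
    using valid by (simp add: valid_joint_pol_def)
  obtain Jbar where Jbar: "(\<lambda>k. Jret n A P r \<gamma> d (\<lambda>i. it k i 0)) \<longlonglongrightarrow> Jbar"
    using incseq_convergent[OF scheme.incseq_Jret_rounds] scheme.Jret_le[OF valid_rounds scheme.d_prob]
    by blast
  moreover have "\<exists>\<pi>bar kk. strict_mono kk \<and> pol_conv n A (\<lambda>m. \<lambda>i. it (kk m) i 0) \<pi>bar"
    using scheme.valid_policies_convergent_subseq[of "\<lambda>k i. it k i 0"] valid_rounds by simp
  moreover have "Jret n A P r \<gamma> d \<pi>bar = Jbar"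
    if "strict_mono kk" "pol_conv n A (\<lambda>m. \<lambda>i. it (kk m) i 0) \<pi>bar" for \<pi>bar kk
  proof -
    have "(\<lambda>m. Jret n A P r \<gamma> d (\<lambda>i. it (kk m) i 0)) \<longlonglongrightarrow> Jbar"
      using LIMSEQ_subseq_LIMSEQ[OF Jbar that(1)] by (simp add: o_def)
    with scheme.Jret_tendsto[OF scheme.d_prob valid_rounds that(2)] show ?thesis
      by (rule LIMSEQ_unique)
  qed
  ultimately show ?thesis by blast
qed

end
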